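(* Let $M$ be a closed surface with a triangulation $\mathcal{T}=(V,E,F)$, $V=\{v_1,\dots,v_N\}$, and let $\Phi:E\to[0,\pi)$ be a weight satisfying condition $\langle\star\rangle$ (see context). Let $R>0$ be a constant. Then there exist positive constants $a_1(\Phi,R)$, $a_2(\Phi,R)$, $a_3(\Phi,R)$, depending only on $\Phi$ and $R$, such that for every hyperbolic circle packing metric $r=(r_1,\dots,r_N)\in\mathbb{R}_{>0}^N$ with $r_i\ge R$ for all $v_i\in V$, one has $a_1\le A_i\le a_2$ for every vertex $v_i$, and $0\le B_{ij}\le a_3$ for all adjacent vertices $v_i,v_j$.
   Context: Weights: write $\Phi_{ij}=\Phi(e_{ij})$ and $I_{ij}=\cos\Phi_{ij}$. Condition $\langle\star\rangle$: for every face $\triangle_{ijk}\in F$, $I_{ij}+I_{ik}I_{jk}\ge0$, $I_{ik}+I_{ij}I_{jk}\ge0$, $I_{jk}+I_{ij}I_{ik}\ge0$. A circle packing metric is $r:V\to(0,\infty)$, $r_i=r(v_i)$ (radius of a circle centered at $v_i$). In hyperbolic background geometry the edge $e_{ij}$ gets length $l_{ij}=\cosh^{-1}(\cosh r_i\cosh r_j+\sinh r_i\sinh r_j\cos\Phi_{ij})$; under $\langle\star\rangle$ the three lengths of each face satisfy the triangle inequalities, so each face $\triangle_{ijk}$ is realized as a hyperbolic triangle; $\theta_i^{jk}\in(0,\pi)$ denotes its inner angle at $v_i$. Set $u_i=\ln\tanh(r_i/2)$ (a diffeomorphism $\mathbb{R}^N_{>0}\to\mathbb{R}^N_{<0}$)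 and regard angles and areas as functions of $u=(u_1,\dots,u_N)$. For an edge $e_{ij}$ with adjacent faces $\triangle_{ijk},\triangle_{ijl}$, define $B_{ij}=\frac{\partial\theta_i^{jk}}{\partial u_j}+\frac{\partial\theta_i^{jl}}{\partial u_j}$, and for a vertex $v_i$ define $A_i=\frac{\partial}{\partial u_i}\Big(\sum_{\triangle_{ijk}\in F}\mathrm{Area}(\triangle_{ijk})\Big)$, the sum over all faces containing $v_i$ (hyperbolic areas). *)

theory Defs
  imports "HOL-Analysis.Analysis"
begin

definition tri_edges :: "'a set set \<Rightarrow> 'a set set" where
  "tri_edges F = {e. \<exists>f\<in>F. e \<subseteq> f \<and> card e = 2}"

definition face_adj :: "'a set set \<Rightarrow> ('a set \<times> 'a set) set" where
  "face_adj F = {(f, g). f \<in> F \<and> g \<in> F \<and> card (f \<inter> g) = 2}"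

definition closed_surface_triangulation :: "'a set \<Rightarrow> 'a set set \<Rightarrow> bool" where
  "closed_surface_triangulation V F \<longleftrightarrow>
     finite V \<and> V \<noteq> {} \<and>
     (\<forall>f\<in>F. f \<subseteq> V \<and> card f = 3) \<and>
     (\<forall>v\<in>V. \<exists>f\<in>F. v \<in> f) \<and>
     (\<forall>e\<in>tri_edges F. card {f\<in>F. e \<subseteq> f} = 2) \<and>
     \<comment> \<open>vertex links are single cycles (the star of each vertex is a disk)\<close>
     (\<forall>v\<in>V. \<forall>f\<in>F. \<forall>g\<in>F. v \<in> f \<longrightarrow> v \<in> g \<longrightarrow>
        (f, g) \<in> (face_adj {h\<in>F. v \<in> h})\<^sup>*) \<and>
     \<comment> \<open>the surface is connected\<close>
     (\<forall>f\<in>F. \<forall>g\<in>F. (f, g) \<in> (face_adj F)\<^sup>*)"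

definition star_condition :: "'a set set \<Rightarrow> ('a set \<Rightarrow> real) \<Rightarrow> bool" where
  "star_condition F \<Phi> \<longleftrightarrow>
     (\<forall>f\<in>F. \<forall>i j k. f = {i, j, k} \<longrightarrow>
        cos (\<Phi> {i, j}) + cos (\<Phi> {i, k}) * cos (\<Phi> {j, k}) \<ge> 0)"

definition edge_len :: "('a set \<Rightarrow> real) \<Rightarrow> ('a \<Rightarrow> real) \<Rightarrow> 'a set \<Rightarrow> real" where
  "edge_len \<Phi> r e =
     arcosh ((\<Prod>w\<in>e. cosh (r w)) + (\<Prod>w\<in>e. sinh (r w)) * cos (\<Phi> e))"

(* inner angle at vertex v of the hyperbolic triangle realizing face f (hyperbolic law of cosines) *)
definition face_angle :: "('a set \<Rightarrow> real) \<Rightarrow> ('a \<Rightarrow> real) \<Rightarrow> 'a set \<Rightarrow> 'a \<Rightarrow> real" where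
  "face_angle \<Phi> r f v =
     arccos (((\<Prod>w\<in>f - {v}. cosh (edge_len \<Phi> r {v, w})) - cosh (edge_len \<Phi> r (f - {v})))
             / (\<Prod>w\<in>f - {v}. sinh (edge_len \<Phi> r {v, w})))"

definition face_area :: "('a set \<Rightarrow> real) \<Rightarrow> ('a \<Rightarrow> real) \<Rightarrow> 'a set \<Rightarrow> real" where
  "face_area \<Phi> r f = pi - (\<Sum>v\<in>f. face_angle \<Phi> r f v)"

definition rad_of_u :: "real \<Rightarrow> real" where
  "rad_of_u x = 2 * artanh (exp x)"

definition u_of_rad :: "real \<Rightarrow> real" where
  "u_of_rad x = ln (tanh (x / 2))"

definition angle_u :: "('a set \<Rightarrow> real) \<Rightarrow> ('a \<Rightarrow> real) \<Rightarrow> 'a set \<Rightarrow> 'a \<Rightarrow> real" where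
  "angle_u \<Phi> u f v = face_angle \<Phi> (\<lambda>w. rad_of_u (u w)) f v"

definition area_u :: "('a set \<Rightarrow> real) \<Rightarrow> ('a \<Rightarrow> real) \<Rightarrow> 'a set \<Rightarrow> real" where
  "area_u \<Phi> u f = face_area \<Phi> (\<lambda>w. rad_of_u (u w)) f"

definition B_coef :: "'a set set \<Rightarrow> ('a set \<Rightarrow> real) \<Rightarrow> ('a \<Rightarrow> real) \<Rightarrow> 'a \<Rightarrow> 'a \<Rightarrow> real" where
  "B_coef F \<Phi> u i j =
     (\<Sum>f\<in>{f\<in>F. {i, j} \<subseteq> f}. deriv (\<lambda>t. angle_u \<Phi> (u(j := t)) f i) (u j))"

definition A_coef :: "'a set set \<Rightarrow> ('a set \<Rightarrow> real) \<Rightarrow> ('a \<Rightarrow> real) \<Rightarrow> 'a \<Rightarrow> real" where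
  "A_coef F \<Phi> u i =
     deriv (\<lambda>t. \<Sum>f\<in>{f\<in>F. i \<in> f}. area_u \<Phi> (u(i := t)) f) (u i)"

end

theory Submission
  imports Defs
begin

(* Write a = e^(u_i) = tanh (r_i/2), b, c for the coordinates of the vertices of a face and
   x, y, z for the cosines of the weights of its edges ij, ik, jk.  Then cosh and sinh of the
   edge lengths, and hence the cosines of the angles, are algebraic in a, b, c, x, y, z, and
   differentiating the hyperbolic law of cosines gives closed formulas
     d theta_i / d u_j = 16 a b (1 - a^2) (1 - b^2) S / (M_ab sqrt G),
     d Area / d u_i   = 8 a W / (F_ab F_ac sqrt G),
   where M_ab = 4 E_ab F_ab is the numerator of sinh^2 of the edge length and G the numerator
   of sin^2 of the angle.  Expanded, S, W and G are sums of monomials in a, b, c times one of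
   1 - x^2, x + y z, y + x z, z + x y and kappa = 1 + x^2 + y^2 + z^2 + 4 x y z.  Condition
   <star> makes all of these factors nonnegative, and kappa >= delta^2 as soon as all cosines
   are at least delta - 1.  For r >= R the coordinates lie in [tanh (R/2), 1), so every
   numerator and denominator is bounded above and away from zero uniformly; summing over the
   finitely many faces at a vertex or an edge gives the constants. *)

section \<open>Hyperbolic triangles in the coordinates tanh (r/2)\<close>

(* With t = tanh (r/2) one has cosh r = (1 + t^2)/(1 - t^2) and sinh r = 2 t/(1 - t^2).  Hence
   an edge between vertices with coordinates a, b and weight cosine x has
   cosh l = cosh_num a b x / ((1 - a^2) (1 - b^2)) and
   sinh^2 l = sinh2_num a b x / ((1 - a^2) (1 - b^2))^2, and cos_angle a b c x y z is the
   cosine of the angle at a (edge_len_coords, angle_u_eq_arccos). *)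

definition cosh_num :: "real \<Rightarrow> real \<Rightarrow> real \<Rightarrow> real" where
  "cosh_num a b x = (1 + a^2) * (1 + b^2) + 4*a*b*x"

definition efac :: "real \<Rightarrow> real \<Rightarrow> real \<Rightarrow> real" where
  "efac a b x = a^2 + b^2 + 2*a*b*x"

definition ffac :: "real \<Rightarrow> real \<Rightarrow> real \<Rightarrow> real" where
  "ffac a b x = 1 + a^2*b^2 + 2*a*b*x"

definition sinh2_num :: "real \<Rightarrow> real \<Rightarrow> real \<Rightarrow> real" where
  "sinh2_num a b x = 4 * efac a b x * ffac a b x"

definition cos_angle_num :: "real \<Rightarrow> real \<Rightarrow> real \<Rightarrow> real \<Rightarrow> real \<Rightarrow> real \<Rightarrow> real" where
  "cos_angle_num a b c x y z = cosh_num a b x * cosh_num a c y - cosh_num b c z * (1 - a^2)^2"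

definition cos_angle :: "real \<Rightarrow> real \<Rightarrow> real \<Rightarrow> real \<Rightarrow> real \<Rightarrow> real \<Rightarrow> real" where
  "cos_angle a b c x y z =
     cos_angle_num a b c x y z / (sqrt (sinh2_num a b x) * sqrt (sinh2_num a c y))"

(* ((1 - a^2) (1 - b^2) (1 - c^2))^2 times 1 + 2 ch_ab ch_ac ch_bc - ch_ab^2 - ch_ac^2 - ch_bc^2,
   where ch = cosh of the edge lengths: minus the Gram determinant of the triangle. *)
definition gram :: "real \<Rightarrow> real \<Rightarrow> real \<Rightarrow> real \<Rightarrow> real \<Rightarrow> real \<Rightarrow> real" where
  "gram a b c x y z =
     ((1 - a^2) * (1 - b^2) * (1 - c^2))^2
     + 2 * cosh_num a b x * cosh_num a c y * cosh_num b c z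
     - (cosh_num a b x * (1 - c^2))^2 - (cosh_num a c y * (1 - b^2))^2
     - (cosh_num b c z * (1 - a^2))^2"

lemma sinh2_num_eq: "(cosh_num a b x)^2 - ((1 - a^2) * (1 - b^2))^2 = sinh2_num a b x"
  unfolding cosh_num_def sinh2_num_def efac_def ffac_def by algebra

lemma cosh_num_minus: "cosh_num a b x - (1 - a^2) * (1 - b^2) = 2 * efac a b x"
  unfolding cosh_num_def efac_def by algebra

lemma sinh2_num_commute: "sinh2_num b a x = sinh2_num a b x"
  unfolding sinh2_num_def efac_def ffac_def by algebra

lemma sin_angle_sq_eq:
  "sinh2_num a b x * sinh2_num a c y - (cos_angle_num a b c x y z)^2 = gram a b c x y z * (1 - a^2)^2"
  unfolding sinh2_num_def cos_angle_num_def gram_def cosh_num_def efac_def ffac_def by algebra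

lemma gram_swap: "gram b a c x z y = gram a b c x y z"
  unfolding gram_def cosh_num_def by algebra

lemma gram_rotate: "gram c a b y z x = gram a b c x y z"
  unfolding gram_def cosh_num_def by algebra

lemma efac_ge: "2*a*b*(1 + x) \<le> efac a b x"
proof -
  have "efac a b x = (a - b)^2 + 2*a*b*(1 + x)" unfolding efac_def by algebra
  then show ?thesis by simp
qed

lemma ffac_ge: "2*a*b*(1 + x) \<le> ffac a b x"
proof -
  have "ffac a b x = (1 - a*b)^2 + 2*a*b*(1 + x)" unfolding ffac_def by algebra
  then show ?thesis by simp
qed

lemma sinh2_num_pos:
  assumes "0 < a" "0 < b" "-1 < x"
  shows "0 < sinh2_num a b x"
proof -
  have "0 < 2*a*b*(1 + x)" using assms by simp
  then have "0 < efac a b x" "0 < ffac a b x" using efac_ge ffac_ge by (metis order_less_le_trans)+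
  then show ?thesis unfolding sinh2_num_def by simp
qed

lemma cos_angle_num_sq_less:
  assumes "0 < gram a b c x y z" "0 < 1 - a^2"
  shows "(cos_angle_num a b c x y z)^2 < sinh2_num a b x * sinh2_num a c y"
proof -
  have "0 < gram a b c x y z * (1 - a^2)^2" using assms by simp
  then show ?thesis using sin_angle_sq_eq[of a b x c y z] by linarith
qed

lemma sqrt_sin_angle_sq_eq:
  assumes "0 \<le> 1 - a^2"
  shows "sqrt (sinh2_num a b x * sinh2_num a c y - (cos_angle_num a b c x y z)^2)
           = sqrt (gram a b c x y z) * (1 - a^2)"
  unfolding sin_angle_sq_eq using assms by (simp add: real_sqrt_mult)

lemma cosh_sinh_rad_of_u:
  assumes "u < 0"
  shows "cosh (rad_of_u u) = (1 + (exp u)^2) / (1 - (exp u)^2)"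
    and "sinh (rad_of_u u) = 2 * exp u / (1 - (exp u)^2)"
proof -
  define t where "t = exp u"
  have t: "0 < t" "t < 1" "0 < 1 - t^2" using assms by (auto simp: t_def power_less_one_iff)
  have "rad_of_u u = ln ((1 + t) / (1 - t))"
    unfolding rad_of_u_def artanh_def t_def by simp
  then have e1: "exp (rad_of_u u) = (1 + t) / (1 - t)" using t by simp
  have e2: "exp (- rad_of_u u) = (1 - t) / (1 + t)"
    unfolding exp_minus e1 using t by (simp add: field_simps)
  show "cosh (rad_of_u u) = (1 + (exp u)^2) / (1 - (exp u)^2)"
    unfolding cosh_field_def e1 e2 t_def[symmetric] using t by (simp add: field_simps power2_eq_square)
  show "sinh (rad_of_u u) = 2 * exp u / (1 - (exp u)^2)"
    unfolding sinh_field_def e1 e2 t_def[symmetric] using t by (simp add: field_simps power2_eq_square)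
qed

lemma edge_len_coords:
  fixes \<Phi> :: "'a set \<Rightarrow> real" and u :: "'a \<Rightarrow> real"
  assumes "v \<noteq> w" "u v < 0" "u w < 0"
  defines "a \<equiv> exp (u v)" and "b \<equiv> exp (u w)" and "x \<equiv> cos (\<Phi> {v, w})"
  shows "cosh (edge_len \<Phi> (\<lambda>t. rad_of_u (u t)) {v, w}) = cosh_num a b x / ((1 - a^2) * (1 - b^2))"
    and "sinh (edge_len \<Phi> (\<lambda>t. rad_of_u (u t)) {v, w}) = sqrt (sinh2_num a b x) / ((1 - a^2) * (1 - b^2))"
proof -
  define pa pb where "pa = 1 - a^2" and "pb = 1 - b^2"
  have p: "0 < pa" "0 < pb"
    using assms by (auto simp: pa_def pb_def power_less_one_iff)
  have "(\<Prod>t\<in>{v, w}. cosh (rad_of_u (u t))) + (\<Prod>t\<in>{v, w}. sinh (rad_of_u (u t))) * x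
      = (1 + a^2) / pa * ((1 + b^2) / pb) + 2*a / pa * (2*b / pb) * x"
    using assms(1) cosh_sinh_rad_of_u[OF assms(2)] cosh_sinh_rad_of_u[OF assms(3)]
    by (simp add: a_def b_def pa_def pb_def)
  also have "\<dots> = cosh_num a b x / (pa * pb)"
    unfolding cosh_num_def using p by (simp add: field_simps)
  finally have len: "edge_len \<Phi> (\<lambda>t. rad_of_u (u t)) {v, w} = arcosh (cosh_num a b x / (pa * pb))"
    unfolding edge_len_def x_def by simp
  have "-1 \<le> x" by (simp add: x_def)
  then have "0 \<le> 2*a*b*(1 + x)" by (simp add: a_def b_def)
  then have "pa * pb \<le> cosh_num a b x"
    using efac_ge[of a b x] cosh_num_minus[of a b x] unfolding pa_def pb_def by linarith
  then have ge1: "1 \<le> cosh_num a b x / (pa * pb)" using p by simp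
  have "(cosh_num a b x / (pa * pb))^2 - 1 = sinh2_num a b x / (pa * pb)^2"
    using sinh2_num_eq[of a b x, folded pa_def pb_def] p by (simp add: field_simps)
  then show "cosh (edge_len \<Phi> (\<lambda>t. rad_of_u (u t)) {v, w}) = cosh_num a b x / ((1 - a^2) * (1 - b^2))"
    and "sinh (edge_len \<Phi> (\<lambda>t. rad_of_u (u t)) {v, w}) = sqrt (sinh2_num a b x) / ((1 - a^2) * (1 - b^2))"
    unfolding len sinh_arcosh_real[OF ge1] pa_def[symmetric] pb_def[symmetric] using ge1 p
    by (simp_all add: real_sqrt_divide)
qed

lemma angle_u_eq_arccos:
  fixes \<Phi> :: "'a set \<Rightarrow> real" and u :: "'a \<Rightarrow> real"
  assumes "i \<noteq> j" "i \<noteq> k" "j \<noteq> k" "u i < 0" "u j < 0" "u k < 0"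
    and "-1 < cos (\<Phi> {i, j})" "-1 < cos (\<Phi> {i, k})"
  shows "angle_u \<Phi> u {i, j, k} i = arccos (cos_angle (exp (u i)) (exp (u j)) (exp (u k))
            (cos (\<Phi> {i, j})) (cos (\<Phi> {i, k})) (cos (\<Phi> {j, k})))"
proof -
  define r where "r = (\<lambda>t. rad_of_u (u t))"
  define a b c where "a = exp (u i)" and "b = exp (u j)" and "c = exp (u k)"
  define x y z where "x = cos (\<Phi> {i, j})" and "y = cos (\<Phi> {i, k})" and "z = cos (\<Phi> {j, k})"
  define pa pb pc where "pa = 1 - a^2" and "pb = 1 - b^2" and "pc = 1 - c^2"
  have p: "0 < pa" "0 < pb" "0 < pc"
    using assms by (auto simp: a_def b_def c_def pa_def pb_def pc_def power_less_one_iff)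
  have M: "0 < sinh2_num a b x" "0 < sinh2_num a c y"
    using assms by (auto intro!: sinh2_num_pos simp: a_def b_def c_def x_def y_def)
  have ij: "cosh (edge_len \<Phi> r {i, j}) = cosh_num a b x / (pa * pb)"
      "sinh (edge_len \<Phi> r {i, j}) = sqrt (sinh2_num a b x) / (pa * pb)"
    using edge_len_coords[of i j u \<Phi>] assms
    by (simp_all add: r_def a_def b_def x_def pa_def pb_def)
  have ik: "cosh (edge_len \<Phi> r {i, k}) = cosh_num a c y / (pa * pc)"
      "sinh (edge_len \<Phi> r {i, k}) = sqrt (sinh2_num a c y) / (pa * pc)"
    using edge_len_coords[of i k u \<Phi>] assms
    by (simp_all add: r_def a_def c_def y_def pa_def pc_def)
  have jk: "cosh (edge_len \<Phi> r {j, k}) = cosh_num b c z / (pb * pc)"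
    using edge_len_coords[of j k u \<Phi>] assms
    by (simp add: r_def b_def c_def z_def pb_def pc_def)
  have "{i, j, k} - {i} = {j, k}" using assms by auto
  then have "face_angle \<Phi> r {i, j, k} i
      = arccos ((cosh (edge_len \<Phi> r {i, j}) * cosh (edge_len \<Phi> r {i, k}) - cosh (edge_len \<Phi> r {j, k}))
                / (sinh (edge_len \<Phi> r {i, j}) * sinh (edge_len \<Phi> r {i, k})))"
    unfolding face_angle_def using assms by simp
  also have "(cosh (edge_len \<Phi> r {i, j}) * cosh (edge_len \<Phi> r {i, k}) - cosh (edge_len \<Phi> r {j, k}))
      / (sinh (edge_len \<Phi> r {i, j}) * sinh (edge_len \<Phi> r {i, k})) = cos_angle a b c x y z"
    unfolding ij ik jk cos_angle_def cos_angle_num_def pa_def[symmetric] using p M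
    by (simp add: field_simps power2_eq_square)
  finally show ?thesis unfolding angle_u_def r_def a_def b_def c_def x_def y_def z_def .
qed


section \<open>Derivatives of the angles and of the area\<close>

lemma DERIV_arccos_quotient:
  fixes X M N :: "real \<Rightarrow> real"
  assumes dX: "(X has_real_derivative X') (at t)"
    and dM: "(M has_real_derivative M') (at t)"
    and dN: "(N has_real_derivative N') (at t)"
    and pos: "0 < M t" "0 < N t" and lt: "(X t)^2 < M t * N t"
  shows "((\<lambda>s. arccos (X s / (sqrt (M s) * sqrt (N s)))) has_real_derivative
           - (2*X'*M t*N t - X t*(M'*N t + M t*N')) / (2*M t*N t * sqrt (M t*N t - (X t)^2))) (at t)"
proof -
  define m n p where "m = sqrt (M t)" and "n = sqrt (N t)" and "p = sqrt (M t*N t - (X t)^2)"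
  have mn: "0 < m" "0 < n" "m^2 = M t" "n^2 = N t" using pos by (simp_all add: m_def n_def)
  have p: "0 < p" "p^2 = M t*N t - (X t)^2" using lt by (simp_all add: p_def)
  define q where "q = X t / (m * n)"
  have one_minus: "1 - q^2 = (p / (m*n))^2"
    unfolding q_def power_divide power_mult_distrib mn(3,4) p(2) using pos by (simp add: field_simps)
  have pos_ratio: "0 < p / (m*n)" using mn p by simp
  have sq: "sqrt (1 - q^2) = p / (m*n)"
    by (rule real_sqrt_unique[OF one_minus[symmetric] less_imp_le[OF pos_ratio]])
  have "0 < (p / (m*n))^2" using pos_ratio by (rule zero_less_power)
  then have "q^2 < 1" using one_minus by linarith
  then have q: "-1 < q" "q < 1" by (simp_all add: abs_square_less_1 abs_less_iff)
  have dQ: "((\<lambda>s. X s / (sqrt (M s) * sqrt (N s))) has_real_derivative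
      (X' * (m*n) - X t * (inverse m / 2 * M' * n + m * (inverse n / 2 * N'))) / (m*n)^2) (at t)"
    using mn by (auto intro!: derivative_eq_intros dX dM dN simp: m_def n_def power2_eq_square)
  have "((\<lambda>s. arccos (X s / (sqrt (M s) * sqrt (N s)))) has_real_derivative
      inverse (- sqrt (1 - q^2))
        * ((X' * (m*n) - X t * (inverse m / 2 * M' * n + m * (inverse n / 2 * N'))) / (m*n)^2)) (at t)"
    using DERIV_chain2[OF DERIV_arccos[OF q, unfolded q_def m_def n_def] dQ]
    by (simp add: q_def m_def n_def)
  moreover have "inverse (- sqrt (1 - q^2))
        * ((X' * (m*n) - X t * (inverse m / 2 * M' * n + m * (inverse n / 2 * N'))) / (m*n)^2)
      = - (2*X'*M t*N t - X t*(M'*N t + M t*N')) / (2*M t*N t*p)"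
    unfolding sq mn(3,4)[symmetric] using mn(1,2) p(1) by (simp add: field_simps power2_eq_square)
  ultimately show ?thesis by (simp add: p_def)
qed

definition cross_num :: "real \<Rightarrow> real \<Rightarrow> real \<Rightarrow> real \<Rightarrow> real \<Rightarrow> real \<Rightarrow> real" where
  "cross_num a b c x y z =
     b*c*(1 + a^2)*(y + x*z) + a*c*(1 + b^2)*(z + x*y) + a*b*(1 + c^2)*(1 - x^2)"

lemma cross_num_swap: "cross_num b a c x z y = cross_num a b c x y z"
  unfolding cross_num_def by algebra

lemma cross_num_rotate: "cross_num c a b y z x = cross_num a c b y x z"
  unfolding cross_num_def by algebra

definition sinh2_num_deriv :: "real \<Rightarrow> real \<Rightarrow> real \<Rightarrow> real" where
  "sinh2_num_deriv a b x = 4 * ((2*a + 2*b*x) * ffac a b x + efac a b x * (2*a*b^2 + 2*b*x))"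

lemma DERIV_sinh2_num: "((\<lambda>t. sinh2_num t b x) has_real_derivative sinh2_num_deriv a b x) (at a)"
  unfolding sinh2_num_def sinh2_num_deriv_def efac_def ffac_def
  by (auto intro!: derivative_eq_intros simp: algebra_simps power2_eq_square)

lemma angle_deriv_identity:
  "2 * ((2*b*(1 + a^2) + 4*a*x) * cosh_num a c y - (2*b*(1 + c^2) + 4*c*z) * (1 - a^2)^2)
       * sinh2_num a b x
     - cos_angle_num a b c x y z * sinh2_num_deriv b a x
   = - 32*a*(1 - a^2)^2*(1 - b^2)*cross_num a b c x y z"
  unfolding sinh2_num_def sinh2_num_deriv_def cos_angle_num_def cross_num_def cosh_num_def
    efac_def ffac_def
  by algebra

lemma DERIV_angle_snd:
  assumes M: "0 < sinh2_num a b x" "0 < sinh2_num a c y" and G: "0 < gram a b c x y z"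
    and p: "0 < 1 - a^2"
  shows "((\<lambda>t. arccos (cos_angle a t c x y z)) has_real_derivative
           16*a*(1 - a^2)*(1 - b^2)*cross_num a b c x y z / (sinh2_num a b x * sqrt (gram a b c x y z)))
         (at b)"
proof -
  define X' where
    "X' = (2*b*(1 + a^2) + 4*a*x) * cosh_num a c y - (2*b*(1 + c^2) + 4*c*z) * (1 - a^2)^2"
  have dX: "((\<lambda>t. cos_angle_num a t c x y z) has_real_derivative X') (at b)"
    unfolding X'_def cos_angle_num_def cosh_num_def
    by (auto intro!: derivative_eq_intros simp: algebra_simps)
  have dM: "((\<lambda>t. sinh2_num a t x) has_real_derivative sinh2_num_deriv b a x) (at b)"
    using DERIV_sinh2_num[of a x b] by (simp add: sinh2_num_commute)
  define pa pb M N g where "pa = 1 - a^2" and "pb = 1 - b^2" and "M = sinh2_num a b x"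
    and "N = sinh2_num a c y" and "g = sqrt (gram a b c x y z)"
  define X M' S where "X = cos_angle_num a b c x y z" and "M' = sinh2_num_deriv b a x"
    and "S = cross_num a b c x y z"
  have D: "((\<lambda>t. arccos (cos_angle a t c x y z)) has_real_derivative
      - (2*X'*M*N - X*(M'*N + M*0)) / (2*M*N*(g*pa))) (at b)"
    using DERIV_arccos_quotient[OF dX dM DERIV_const M cos_angle_num_sq_less[OF G p]]
    unfolding cos_angle_def sqrt_sin_angle_sq_eq[OF less_imp_le[OF p]]
    by (simp add: M_def N_def X_def M'_def g_def pa_def)
  have numer: "2*X'*M - X*M' = - 32*a*pa^2*pb*S"
    unfolding X'_def M_def X_def M'_def pa_def pb_def S_def by (rule angle_deriv_identity)
  have nz: "pa \<noteq> 0" "M \<noteq> 0" "N \<noteq> 0" "g \<noteq> 0"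
    using M G p unfolding pa_def M_def N_def g_def by auto
  have "- (2*X'*M*N - X*(M'*N + M*0)) / (2*M*N*(g*pa)) = - ((2*X'*M - X*M') * N) / (2*M*N*(g*pa))"
    by (simp add: algebra_simps)
  also have "\<dots> = 16*a*pa*pb*S / (M*g)"
    unfolding numer using nz by (simp add: field_simps power2_eq_square)
  finally show ?thesis
    using DERIV_cong[OF D] by (simp add: pa_def pb_def M_def g_def S_def)
qed

definition kappa :: "real \<Rightarrow> real \<Rightarrow> real \<Rightarrow> real" where
  "kappa x y z = 1 + x^2 + y^2 + z^2 + 4*x*y*z"

definition area_num :: "real \<Rightarrow> real \<Rightarrow> real \<Rightarrow> real \<Rightarrow> real \<Rightarrow> real \<Rightarrow> real" where
  "area_num a b c x y z =
     b*c^2*(1 + 3*a^2 + 3*a^2*b^2 + a^4*b^2)*(x + y*z)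
     + b^2*c*(1 + 3*a^2 + 3*a^2*c^2 + a^4*c^2)*(y + x*z)
     + a*b*c*(2 + b^2 + c^2 + a^2*b^2 + a^2*c^2 + 2*a^2*b^2*c^2)*(z + x*y)
     + a*b^2*(1 + a^2*c^4)*(1 - x^2) + a*c^2*(1 + a^2*b^4)*(1 - y^2)
     + a*b^2*c^2*(1 + a^2)*(kappa x y z + 1 - z^2)"

(* Over the common denominator 2 M_ab M_ac sqrt G (1 - a^2) the derivatives in a of the three
   angles have numerators adding up to a multiple of E_ab E_ac, which cancels against
   M_ab M_ac = 16 E_ab F_ab E_ac F_ac. *)
lemma area_deriv_identity:
  "2 * ((2*a*(1 + b^2) + 4*b*x) * cosh_num a c y + cosh_num a b x * (2*a*(1 + c^2) + 4*c*y)
          + 4*a*(1 - a^2) * cosh_num b c z) * sinh2_num a b x * sinh2_num a c y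
     - cos_angle_num a b c x y z
         * (sinh2_num_deriv a b x * sinh2_num a c y + sinh2_num a b x * sinh2_num_deriv a c y)
   = (1 - a^2) * (32*b*(1 - a^2)*(1 - b^2)*cross_num a b c x y z * sinh2_num a c y
                  + 32*c*(1 - a^2)*(1 - c^2)*cross_num a c b y x z * sinh2_num a b x
                  + 256 * efac a b x * efac a c y * area_num a b c x y z)"
  unfolding sinh2_num_def sinh2_num_deriv_def cos_angle_num_def cross_num_def cosh_num_def
    efac_def ffac_def area_num_def kappa_def
  by algebra

lemma DERIV_angle_sum:
  assumes M: "0 < sinh2_num a b x" "0 < sinh2_num a c y" "0 < sinh2_num b c z"
    and G: "0 < gram a b c x y z" and p: "0 < 1 - a^2" "0 < 1 - b^2" "0 < 1 - c^2"
  shows "((\<lambda>t. arccos (cos_angle t b c x y z) + arccos (cos_angle b t c x z y)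
                + arccos (cos_angle c t b y z x)) has_real_derivative
           - 8 * area_num a b c x y z / (ffac a b x * ffac a c y * sqrt (gram a b c x y z))) (at a)"
proof -
  define X' where "X' = (2*a*(1 + b^2) + 4*b*x) * cosh_num a c y
    + cosh_num a b x * (2*a*(1 + c^2) + 4*c*y) + 4*a*(1 - a^2) * cosh_num b c z"
  have dX: "((\<lambda>t. cos_angle_num t b c x y z) has_real_derivative X') (at a)"
    unfolding X'_def cos_angle_num_def cosh_num_def
    by (auto intro!: derivative_eq_intros simp: algebra_simps power2_eq_square power3_eq_cube)
  have Mba: "0 < sinh2_num b a x" and Mca: "0 < sinh2_num c a y" and Mcb: "0 < sinh2_num c b z"
    using M by (simp_all add: sinh2_num_commute)
  define pa pb pc where "pa = 1 - a^2" and "pb = 1 - b^2" and "pc = 1 - c^2"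
  define M N g where "M = sinh2_num a b x" and "N = sinh2_num a c y"
    and "g = sqrt (gram a b c x y z)"
  define X M' N' where "X = cos_angle_num a b c x y z" and "M' = sinh2_num_deriv a b x"
    and "N' = sinh2_num_deriv a c y"
  define S1 S2 where "S1 = cross_num a b c x y z" and "S2 = cross_num a c b y x z"
  define E1 E2 F1 F2 where "E1 = efac a b x" and "E2 = efac a c y" and "F1 = ffac a b x"
    and "F2 = ffac a c y"
  have at_a: "((\<lambda>t. arccos (cos_angle t b c x y z)) has_real_derivative
      - (2*X'*M*N - X*(M'*N + M*N')) / (2*M*N*(g*pa))) (at a)"
    using DERIV_arccos_quotient[OF dX DERIV_sinh2_num DERIV_sinh2_num M(1,2) cos_angle_num_sq_less[OF G p(1)]]
    unfolding cos_angle_def sqrt_sin_angle_sq_eq[OF less_imp_le[OF p(1)]]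
    by (simp add: M_def N_def X_def M'_def N'_def g_def pa_def)
  have at_b: "((\<lambda>t. arccos (cos_angle b t c x z y)) has_real_derivative 16*b*pb*pa*S1 / (M*g)) (at a)"
    using DERIV_angle_snd[of b a x c z y] Mba M(3) G p(2)
    unfolding gram_swap[of b a c x z y] cross_num_swap[of b a c x z y] sinh2_num_commute[of b a x]
    by (simp add: pa_def pb_def S1_def M_def g_def)
  have at_c: "((\<lambda>t. arccos (cos_angle c t b y z x)) has_real_derivative 16*c*pc*pa*S2 / (N*g)) (at a)"
    using DERIV_angle_snd[of c a y b z x] Mca Mcb G p(3)
    unfolding gram_rotate[of c a b y z x] cross_num_rotate[of c a b y z x] sinh2_num_commute[of c a y]
    by (simp add: pa_def pc_def S2_def N_def g_def)
  have nz: "pa \<noteq> 0" "g \<noteq> 0" "E1 \<noteq> 0" "E2 \<noteq> 0" "F1 \<noteq> 0" "F2 \<noteq> 0"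
    using p G M unfolding pa_def g_def E1_def E2_def F1_def F2_def sinh2_num_def by auto
  have MN: "M = 4*E1*F1" "N = 4*E2*F2"
    unfolding M_def N_def E1_def E2_def F1_def F2_def sinh2_num_def by simp_all
  have numer: "2*X'*M*N - X*(M'*N + M*N')
      = pa * (32*b*pa*pb*S1*N + 32*c*pa*pc*S2*M + 256*E1*E2*area_num a b c x y z)"
    using area_deriv_identity[of a b x c y z]
    unfolding X'_def M_def N_def X_def M'_def N'_def pa_def pb_def pc_def S1_def S2_def E1_def E2_def
    by simp
  have "- (2*X'*M*N - X*(M'*N + M*N')) / (2*M*N*(g*pa)) + 16*b*pb*pa*S1 / (M*g)
        + 16*c*pc*pa*S2 / (N*g)
      = - 8 * area_num a b c x y z / (F1 * F2 * g)"
    unfolding numer using nz by (simp add: MN field_simps)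
  then show ?thesis
    using DERIV_add[OF DERIV_add[OF at_a at_b] at_c] by (simp add: F1_def F2_def g_def)
qed

definition angle_deriv :: "real \<Rightarrow> real \<Rightarrow> real \<Rightarrow> real \<Rightarrow> real \<Rightarrow> real \<Rightarrow> real" where
  "angle_deriv a b c x y z =
     16*a*b*(1 - a^2)*(1 - b^2)*cross_num a b c x y z / (sinh2_num a b x * sqrt (gram a b c x y z))"

definition area_deriv :: "real \<Rightarrow> real \<Rightarrow> real \<Rightarrow> real \<Rightarrow> real \<Rightarrow> real \<Rightarrow> real" where
  "area_deriv a b c x y z =
     8*a*area_num a b c x y z / (ffac a b x * ffac a c y * sqrt (gram a b c x y z))"

lemma angle_u_has_derivative:
  fixes \<Phi> :: "'a set \<Rightarrow> real" and u :: "'a \<Rightarrow> real" and i j k :: 'a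
  defines "a \<equiv> exp (u i)" and "b \<equiv> exp (u j)" and "c \<equiv> exp (u k)"
    and "x \<equiv> cos (\<Phi> {i, j})" and "y \<equiv> cos (\<Phi> {i, k})" and "z \<equiv> cos (\<Phi> {j, k})"
  assumes "i \<noteq> j" "i \<noteq> k" "j \<noteq> k" and neg: "u i < 0" "u j < 0" "u k < 0"
    and "-1 < x" "-1 < y" "0 < gram a b c x y z"
  shows "((\<lambda>s. angle_u \<Phi> (u(j := s)) {i, j, k} i) has_real_derivative angle_deriv a b c x y z) (at (u j))"
proof -
  have "((\<lambda>t. arccos (cos_angle a t c x y z)) has_real_derivative
      16*a*(1 - a^2)*(1 - b^2)*cross_num a b c x y z / (sinh2_num a b x * sqrt (gram a b c x y z))) (at b)"
    using assms by (intro DERIV_angle_snd sinh2_num_pos) (auto simp: power_less_one_iff)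
  from DERIV_chain2[OF this[unfolded b_def] DERIV_exp]
  have D: "((\<lambda>s. arccos (cos_angle a (exp s) c x y z)) has_real_derivative angle_deriv a b c x y z) (at (u j))"
    by (simp add: angle_deriv_def b_def mult_ac)
  have eq: "arccos (cos_angle a (exp s) c x y z) = angle_u \<Phi> (u(j := s)) {i, j, k} i"
    if "s \<in> {..<0}" for s
    using angle_u_eq_arccos[of i j k "u(j := s)" \<Phi>] assms that
    by (simp add: a_def c_def x_def y_def z_def)
  show ?thesis
    by (rule has_field_derivative_transform_within_open[OF D open_lessThan]) (use neg(2) eq in auto)
qed

lemma area_u_has_derivative:
  fixes \<Phi> :: "'a set \<Rightarrow> real" and u :: "'a \<Rightarrow> real" and i j k :: 'a
  defines "a \<equiv> exp (u i)" and "b \<equiv> exp (u j)" and "c \<equiv> exp (u k)"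
    and "x \<equiv> cos (\<Phi> {i, j})" and "y \<equiv> cos (\<Phi> {i, k})" and "z \<equiv> cos (\<Phi> {j, k})"
  assumes "i \<noteq> j" "i \<noteq> k" "j \<noteq> k" and neg: "u i < 0" "u j < 0" "u k < 0"
    and "-1 < x" "-1 < y" "-1 < z" "0 < gram a b c x y z"
  shows "((\<lambda>s. area_u \<Phi> (u(i := s)) {i, j, k}) has_real_derivative area_deriv a b c x y z) (at (u i))"
proof -
  have "((\<lambda>t. arccos (cos_angle t b c x y z) + arccos (cos_angle b t c x z y)
          + arccos (cos_angle c t b y z x)) has_real_derivative
      - 8 * area_num a b c x y z / (ffac a b x * ffac a c y * sqrt (gram a b c x y z))) (at a)"
    using assms by (intro DERIV_angle_sum sinh2_num_pos) (auto simp: power_less_one_iff)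
  from DERIV_diff[OF DERIV_const[of pi] DERIV_chain2[OF this[unfolded a_def] DERIV_exp]]
  have D: "((\<lambda>s. pi - (arccos (cos_angle (exp s) b c x y z) + arccos (cos_angle b (exp s) c x z y)
          + arccos (cos_angle c (exp s) b y z x))) has_real_derivative area_deriv a b c x y z) (at (u i))"
    by (simp add: area_deriv_def a_def mult_ac)
  have eq: "pi - (arccos (cos_angle (exp s) b c x y z) + arccos (cos_angle b (exp s) c x z y)
          + arccos (cos_angle c (exp s) b y z x)) = area_u \<Phi> (u(i := s)) {i, j, k}"
    if "s \<in> {..<0}" for s
  proof -
    let ?u = "u(i := s)"
    have "angle_u \<Phi> ?u {i, j, k} i = arccos (cos_angle (exp s) b c x y z)"
      using angle_u_eq_arccos[of i j k ?u \<Phi>] assms that by (simp add: b_def c_def x_def y_def z_def)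
    moreover have "angle_u \<Phi> ?u {i, j, k} j = arccos (cos_angle b (exp s) c x z y)"
      using angle_u_eq_arccos[of j i k ?u \<Phi>] assms that
      by (simp add: b_def c_def x_def y_def z_def insert_commute)
    moreover have "angle_u \<Phi> ?u {i, j, k} k = arccos (cos_angle c (exp s) b y z x)"
      using angle_u_eq_arccos[of k i j ?u \<Phi>] assms that
      by (simp add: b_def c_def x_def y_def z_def insert_commute)
    moreover have "area_u \<Phi> ?u {i, j, k}
        = pi - (angle_u \<Phi> ?u {i, j, k} i + angle_u \<Phi> ?u {i, j, k} j + angle_u \<Phi> ?u {i, j, k} k)"
      unfolding area_u_def face_area_def angle_u_def using assms by (simp add: add.assoc)
    ultimately show ?thesis by simp
  qed
  show ?thesis
    by (rule has_field_derivative_transform_within_open[OF D open_lessThan]) (use neg(1) eq in auto)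
qed


section \<open>Uniform bounds on a single face\<close>

lemma gram_expand:
  "gram a b c x y z = 16 *
     (b^2*c^2*(1 + a^4)*(1 - z^2) + a^2*c^2*(1 + b^4)*(1 - y^2) + a^2*b^2*(1 + c^4)*(1 - x^2)
      + 2*a*b*c^2*(1 + a^2)*(1 + b^2)*(x + y*z) + 2*a*b^2*c*(1 + a^2)*(1 + c^2)*(y + x*z)
      + 2*a^2*b*c*(1 + b^2)*(1 + c^2)*(z + x*y) + 2*a^2*b^2*c^2*kappa x y z)"
  unfolding gram_def kappa_def cosh_num_def by algebra

(* kappa p q w = (p^2 + q^2 + 2 p q w) + (1 + w^2 + 2 p q w), and the two summands are at least
   (|p| - |q|)^2 and (1 - |w|)^2. *)
lemma kappa_ge_of_abs_le:
  assumes "\<bar>p\<bar> \<le> 1" "\<bar>q\<bar> \<le> 1" "\<bar>w\<bar> \<le> 1 - \<delta>" "0 \<le> \<delta>"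
  shows "\<delta>^2 \<le> kappa p q w"
proof -
  have pq: "\<bar>p*q\<bar> \<le> 1" using assms by (simp add: abs_mult mult_le_one)
  have w: "\<bar>w\<bar> \<le> 1" using assms by linarith
  have "\<bar>2*p*q*w\<bar> \<le> 2*\<bar>p\<bar>*\<bar>q\<bar>"
    using mult_left_le_one_le[OF _ _ w, of "\<bar>p\<bar>*\<bar>q\<bar>"] by (simp add: abs_mult algebra_simps)
  moreover have "2*\<bar>p\<bar>*\<bar>q\<bar> \<le> p^2 + q^2"
    using sum_squares_bound[of "\<bar>p\<bar>" "\<bar>q\<bar>"] by (simp add: power2_eq_square)
  moreover have "\<bar>2*p*q*w\<bar> \<le> 2*\<bar>w\<bar>"
    using mult_left_le_one_le[OF _ _ pq, of "\<bar>w\<bar>"] by (simp add: abs_mult algebra_simps)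
  moreover have "\<delta>^2 \<le> (1 - \<bar>w\<bar>)^2"
    using assms by (intro power_mono) auto
  ultimately show ?thesis
    unfolding kappa_def by (simp add: power2_eq_square abs_mult_self_eq algebra_simps abs_le_iff)
qed

lemma kappa_ge:
  assumes "0 \<le> \<delta>" "\<delta> \<le> 1"
    and "\<delta> - 1 \<le> x" "x \<le> 1" "\<delta> - 1 \<le> y" "y \<le> 1" "\<delta> - 1 \<le> z" "z \<le> 1"
  shows "\<delta>^2 \<le> kappa x y z"
proof (cases "0 \<le> x*y*z")
  case True
  have "\<delta>^2 \<le> 1" using assms by (simp add: power_le_one)
  also have "1 \<le> kappa x y z" using True unfolding kappa_def by simp
  finally show ?thesis .
next
  case False
  then have "x < 0 \<or> y < 0 \<or> z < 0" by (metis mult_nonneg_nonneg not_le)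
  moreover have "\<bar>x\<bar> \<le> 1" "\<bar>y\<bar> \<le> 1" "\<bar>z\<bar> \<le> 1" using assms by auto
  ultimately show ?thesis
    using assms kappa_ge_of_abs_le[of y z x \<delta>] kappa_ge_of_abs_le[of x z y \<delta>]
      kappa_ge_of_abs_le[of x y z \<delta>]
    unfolding kappa_def by (auto simp: algebra_simps)
qed

lemma ffac_le_4:
  assumes "0 \<le> a" "a \<le> 1" "0 \<le> b" "b \<le> 1" "x \<le> 1"
  shows "ffac a b x \<le> 4"
proof -
  have ab: "0 \<le> a*b" "a*b \<le> 1" using assms by (auto intro: mult_le_one)
  then have "(a*b)^2 \<le> 1" by (simp add: power_le_one)
  moreover have "a*b*x \<le> 1" using ab mult_left_mono[OF assms(5) ab(1)] by simp
  ultimately show ?thesis unfolding ffac_def by (simp add: power_mult_distrib)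
qed

context
  fixes a b c x y z :: real
  assumes unit: "0 \<le> a" "a \<le> 1" "0 \<le> b" "b \<le> 1" "0 \<le> c" "c \<le> 1"
    and cosines: "-1 \<le> x" "x \<le> 1" "-1 \<le> y" "y \<le> 1" "-1 \<le> z" "z \<le> 1"
    and star: "0 \<le> x + y*z" "0 \<le> y + x*z" "0 \<le> z + x*y"
begin

lemma coefficient_bounds:
  "0 \<le> 1 - x^2" "1 - x^2 \<le> 1" "0 \<le> 1 - y^2" "1 - y^2 \<le> 1" "0 \<le> 1 - z^2" "1 - z^2 \<le> 1"
  "x + y*z \<le> 2" "y + x*z \<le> 2" "z + x*y \<le> 2"
  "0 \<le> kappa x y z" "kappa x y z \<le> 8" "0 \<le> kappa x y z + 1 - z^2" "kappa x y z + 1 - z^2 \<le> 8"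
proof -
  have sq: "x^2 \<le> 1" "y^2 \<le> 1" "z^2 \<le> 1" using cosines by (simp_all add: abs_square_le_1)
  have pr: "\<bar>y*z\<bar> \<le> 1" "\<bar>x*z\<bar> \<le> 1" "\<bar>x*y\<bar> \<le> 1" "\<bar>x*y*z\<bar> \<le> 1"
    using cosines by (simp_all add: abs_mult mult_le_one)
  show "0 \<le> 1 - x^2" "1 - x^2 \<le> 1" "0 \<le> 1 - y^2" "1 - y^2 \<le> 1" "0 \<le> 1 - z^2" "1 - z^2 \<le> 1"
    using sq by simp_all
  show "x + y*z \<le> 2" "y + x*z \<le> 2" "z + x*y \<le> 2"
    using pr cosines by (auto simp: abs_le_iff)
  show "0 \<le> kappa x y z" using kappa_ge[of 0 x y z] cosines by simp
  then show "0 \<le> kappa x y z + 1 - z^2" using sq by simp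
  show "kappa x y z \<le> 8" "kappa x y z + 1 - z^2 \<le> 8"
    unfolding kappa_def using sq pr by (auto simp: abs_le_iff)
qed

lemmas poly_bounds = unit cosines star coefficient_bounds

(* Listed first in the intro rules below, so that 0 <= x + y*z is closed instead of being
   split by add_nonneg_nonneg. *)
lemmas coefficients_nonneg = star coefficient_bounds(1,3,5,10,12)

(* The polynomials have nonnegative coefficients, hence are monotone in a, b, c on [0, 1] and
   bounded by their values at a = b = c = 1. *)
lemma gram_le: "gram a b c x y z \<le> 1120"
proof -
  have "gram a b c x y z \<le> gram 1 1 1 x y z"
    unfolding gram_expand
    by (intro coefficients_nonneg mult_left_mono add_mono mult_right_mono mult_mono power_mono
        add_left_mono order_refl)
       (simp_all add: poly_bounds)
  also have "\<dots> = 16 * (2*(1 - z^2) + 2*(1 - y^2) + 2*(1 - x^2)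
      + 8*(x + y*z) + 8*(y + x*z) + 8*(z + x*y) + 2*kappa x y z)"
    unfolding gram_expand by simp
  also have "\<dots> \<le> 16 * (2*1 + 2*1 + 2*1 + 8*2 + 8*2 + 8*2 + 2*8)"
    by (intro coefficient_bounds add_mono mult_left_mono) simp_all
  finally show ?thesis by simp
qed

lemma gram_ge: "32*a^2*b^2*c^2*kappa x y z \<le> gram a b c x y z"
proof -
  have "0 \<le> b^2*c^2*(1 + a^4)*(1 - z^2) + a^2*c^2*(1 + b^4)*(1 - y^2) + a^2*b^2*(1 + c^4)*(1 - x^2)
      + 2*a*b*c^2*(1 + a^2)*(1 + b^2)*(x + y*z) + 2*a*b^2*c*(1 + a^2)*(1 + c^2)*(y + x*z)
      + 2*a^2*b*c*(1 + b^2)*(1 + c^2)*(z + x*y)" (is "0 \<le> ?rest")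
    by (intro coefficients_nonneg add_nonneg_nonneg mult_nonneg_nonneg) (simp_all add: poly_bounds)
  moreover have "gram a b c x y z = 16 * ?rest + 32*a^2*b^2*c^2*kappa x y z"
    unfolding gram_expand by algebra
  ultimately show ?thesis by simp
qed

lemma area_num_le: "area_num a b c x y z \<le> 68"
proof -
  have "area_num a b c x y z \<le> area_num 1 1 1 x y z"
    unfolding area_num_def
    by (intro coefficients_nonneg mult_left_mono add_mono mult_right_mono mult_mono power_mono
        add_left_mono order_refl)
       (simp_all add: poly_bounds)
  also have "\<dots> = 8*(x + y*z) + 8*(y + x*z) + 8*(z + x*y)
      + 2*(1 - x^2) + 2*(1 - y^2) + 2*(kappa x y z + 1 - z^2)"
    unfolding area_num_def by simp
  also have "\<dots> \<le> 8*2 + 8*2 + 8*2 + 2*1 + 2*1 + 2*8"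
    by (intro coefficient_bounds add_mono mult_left_mono) simp_all
  finally show ?thesis by simp
qed

lemma area_num_ge: "a*b^2*c^2*kappa x y z \<le> area_num a b c x y z"
proof -
  have "0 \<le> b*c^2*(1 + 3*a^2 + 3*a^2*b^2 + a^4*b^2)*(x + y*z)
     + b^2*c*(1 + 3*a^2 + 3*a^2*c^2 + a^4*c^2)*(y + x*z)
     + a*b*c*(2 + b^2 + c^2 + a^2*b^2 + a^2*c^2 + 2*a^2*b^2*c^2)*(z + x*y)
     + a*b^2*(1 + a^2*c^4)*(1 - x^2) + a*c^2*(1 + a^2*b^4)*(1 - y^2)"
    by (intro coefficients_nonneg add_nonneg_nonneg mult_nonneg_nonneg) (simp_all add: poly_bounds)
  moreover have "kappa x y z \<le> (1 + a^2)*(kappa x y z + 1 - z^2)"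
    using mult_right_mono[of 1 "1 + a^2" "kappa x y z + 1 - z^2"] poly_bounds by simp
  then have "a*b^2*c^2*kappa x y z \<le> a*b^2*c^2*((1 + a^2)*(kappa x y z + 1 - z^2))"
    using poly_bounds by (intro mult_left_mono) simp_all
  ultimately show ?thesis unfolding area_num_def by (simp add: mult.assoc)
qed

lemma cross_num_bounds: "0 \<le> cross_num a b c x y z" "cross_num a b c x y z \<le> 10"
proof -
  show "0 \<le> cross_num a b c x y z"
    unfolding cross_num_def
    by (intro coefficients_nonneg add_nonneg_nonneg mult_nonneg_nonneg) (simp_all add: poly_bounds)
  have "cross_num a b c x y z \<le> cross_num 1 1 1 x y z"
    unfolding cross_num_def
    by (intro coefficients_nonneg mult_left_mono add_mono mult_right_mono mult_mono power_mono
        add_left_mono order_refl)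
       (simp_all add: poly_bounds)
  also have "\<dots> = 2*(y + x*z) + 2*(z + x*y) + 2*(1 - x^2)"
    unfolding cross_num_def by simp
  also have "\<dots> \<le> 2*2 + 2*2 + 2*1"
    by (intro coefficient_bounds add_mono mult_left_mono) simp_all
  finally show "cross_num a b c x y z \<le> 10" by simp
qed

end


context
  fixes a b c x y z T \<delta> :: real
  assumes coords: "0 < T" "T \<le> a" "a < 1" "T \<le> b" "b < 1" "T \<le> c" "c < 1"
    and margin: "0 < \<delta>" "\<delta> \<le> 1" "\<delta> - 1 \<le> x" "x \<le> 1" "\<delta> - 1 \<le> y" "y \<le> 1" "\<delta> - 1 \<le> z" "z \<le> 1"
    and star: "0 \<le> x + y*z" "0 \<le> y + x*z" "0 \<le> z + x*y"
begin

lemma unit_bounds: "0 \<le> a" "a \<le> 1" "0 \<le> b" "b \<le> 1" "0 \<le> c" "c \<le> 1"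
    "-1 \<le> x" "x \<le> 1" "-1 \<le> y" "y \<le> 1" "-1 \<le> z" "z \<le> 1"
  using coords margin by auto

lemma fac_ge_margin:
  "2*T^2*\<delta> \<le> efac a b x" "2*T^2*\<delta> \<le> ffac a b x" "2*T^2*\<delta> \<le> ffac a c y"
proof -
  have "T^2*\<delta> \<le> a*b*(1 + x)" "T^2*\<delta> \<le> a*c*(1 + y)"
    using coords margin by (auto simp: power2_eq_square intro!: mult_mono)
  then show "2*T^2*\<delta> \<le> efac a b x" "2*T^2*\<delta> \<le> ffac a b x" "2*T^2*\<delta> \<le> ffac a c y"
    using efac_ge[of a b x] ffac_ge[of a b x] ffac_ge[of a c y] by linarith+
qed

lemma fac_pos_margin: "0 < efac a b x" "0 < ffac a b x" "0 < ffac a c y"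
proof -
  have "0 < 2*T^2*\<delta>" using coords margin by simp
  then show "0 < efac a b x" "0 < ffac a b x" "0 < ffac a c y"
    using fac_ge_margin by linarith+
qed

lemma ffac_le: "ffac a b x \<le> 4" "ffac a c y \<le> 4"
  using ffac_le_4 unit_bounds by auto

lemma gram_ge_margin: "(T^3*\<delta>)^2 \<le> gram a b c x y z"
proof -
  have "T^2 \<le> a^2" "T^2 \<le> b^2" "T^2 \<le> c^2" using coords by (auto intro: power_mono)
  then have "T^2*T^2*T^2 \<le> a^2*b^2*c^2" by (intro mult_mono) auto
  moreover have "\<delta>^2 \<le> kappa x y z"
    using kappa_ge[of \<delta> x y z] margin by simp
  ultimately have "(T^2*T^2*T^2)*\<delta>^2 \<le> a^2*b^2*c^2*kappa x y z"
    using coords by (intro mult_mono) auto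
  moreover have "0 \<le> a^2*b^2*c^2*kappa x y z"
    using coefficient_bounds(10)[OF unit_bounds star] by simp
  moreover have "(T^3*\<delta>)^2 = (T^2*T^2*T^2)*\<delta>^2" by algebra
  ultimately show ?thesis
    using gram_ge[OF unit_bounds star] by linarith
qed

lemma gram_pos_margin: "0 < gram a b c x y z"
proof -
  have "0 < (T^3*\<delta>)^2" using coords margin by simp
  then show ?thesis using gram_ge_margin by linarith
qed

lemma sqrt_gram_ge_margin: "T^3*\<delta> \<le> sqrt (gram a b c x y z)"
  using gram_ge_margin by (rule real_le_rsqrt)

lemma sqrt_gram_le: "sqrt (gram a b c x y z) \<le> 34"
  using gram_le[OF unit_bounds star] by (intro real_le_lsqrt) simp_all

lemma angle_deriv_bounds: "0 \<le> angle_deriv a b c x y z" "angle_deriv a b c x y z \<le> 10 / (T^7*\<delta>^3)"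
proof -
  have S: "0 \<le> cross_num a b c x y z" "cross_num a b c x y z \<le> 10"
    using cross_num_bounds[OF unit_bounds star] by auto
  have p: "0 \<le> a*b*(1 - a^2)*(1 - b^2)" "a*b*(1 - a^2)*(1 - b^2) \<le> 1"
    using unit_bounds by (auto intro!: mult_le_one simp: power_le_one)
  have "0 \<le> a*b*(1 - a^2)*(1 - b^2)*cross_num a b c x y z"
    using p(1) S(1) by (rule mult_nonneg_nonneg)
  then have num: "0 \<le> 16*a*b*(1 - a^2)*(1 - b^2)*cross_num a b c x y z"
            "16*a*b*(1 - a^2)*(1 - b^2)*cross_num a b c x y z \<le> 16*1*10"
    using mult_mono[OF p(2) S(2) _ S(1)] by (simp_all add: mult.assoc)
  have M: "16*T^4*\<delta>^2 \<le> sinh2_num a b x"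
  proof -
    have pos: "0 \<le> 2*T^2*\<delta>" using coords margin by simp
    moreover have "0 \<le> efac a b x" using pos fac_ge_margin(1) by linarith
    ultimately have "(2*T^2*\<delta>)*(2*T^2*\<delta>) \<le> efac a b x * ffac a b x"
      using fac_ge_margin by (intro mult_mono) auto
    then show ?thesis unfolding sinh2_num_def by (simp add: power2_eq_square power4_eq_xxxx algebra_simps)
  qed
  have "0 < 16*T^4*\<delta>^2" using coords margin by simp
  moreover have "0 \<le> sinh2_num a b x" using M calculation by linarith
  ultimately have den: "16*T^4*\<delta>^2 * (T^3*\<delta>) \<le> sinh2_num a b x * sqrt (gram a b c x y z)"
    using M sqrt_gram_ge_margin coords margin by (intro mult_mono) auto
  have den0: "0 < 16*T^4*\<delta>^2 * (T^3*\<delta>)" using coords margin by simp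
  have "0 \<le> sinh2_num a b x * sqrt (gram a b c x y z)" using den den0 by linarith
  then show "0 \<le> angle_deriv a b c x y z"
    unfolding angle_deriv_def using num(1) by simp
  have "angle_deriv a b c x y z \<le> 16*1*10 / (16*T^4*\<delta>^2 * (T^3*\<delta>))"
    unfolding angle_deriv_def using num den den0 by (intro frac_le) auto
  also have "16*T^4*\<delta>^2 * (T^3*\<delta>) = 16*(T^7*\<delta>^3)" by algebra
  finally show "angle_deriv a b c x y z \<le> 10 / (T^7*\<delta>^3)" by (simp add: mult.commute)
qed

lemma area_deriv_bounds:
  "T^6*\<delta>^2 / 68 \<le> area_deriv a b c x y z" "area_deriv a b c x y z \<le> 136 / (T^7*\<delta>^3)"
proof -
  have W: "T^5*\<delta>^2 \<le> area_num a b c x y z" "area_num a b c x y z \<le> 68"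
  proof -
    have "T*T^2*T^2 \<le> a*b^2*c^2"
      using coords by (intro mult_mono power_mono) auto
    moreover have "T^5 = T*T^2*T^2" by algebra
    moreover have "\<delta>^2 \<le> kappa x y z"
      using kappa_ge[of \<delta> x y z] margin by simp
    ultimately have "T^5*\<delta>^2 \<le> a*b^2*c^2*kappa x y z"
      using coords by (intro mult_mono) auto
    then show "T^5*\<delta>^2 \<le> area_num a b c x y z"
      using area_num_ge[OF unit_bounds star] by linarith
    show "area_num a b c x y z \<le> 68" using area_num_le[OF unit_bounds star] .
  qed
  have W0: "0 \<le> area_num a b c x y z"
    using W(1) order_trans[of 0 "T^5*\<delta>^2"] coords margin by simp
  have "T*(T^5*\<delta>^2) \<le> a*area_num a b c x y z" "a*area_num a b c x y z \<le> 1*68"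
    using mult_mono[OF coords(2) W(1)] mult_mono[OF unit_bounds(2) W(2)] W0 coords by auto
  moreover have "T*(T^5*\<delta>^2) = T^6*\<delta>^2" by algebra
  ultimately have num: "8*T^6*\<delta>^2 \<le> 8*a*area_num a b c x y z" "8*a*area_num a b c x y z \<le> 8*1*68"
    by linarith+
  have F: "2*T^2*\<delta> \<le> ffac a b x" "2*T^2*\<delta> \<le> ffac a c y" "ffac a b x \<le> 4" "ffac a c y \<le> 4"
    using fac_ge_margin ffac_le by auto
  have pos: "0 < 2*T^2*\<delta>" using coords margin by simp
  have den_lo: "(2*T^2*\<delta>) * (2*T^2*\<delta>) * (T^3*\<delta>) \<le> ffac a b x * ffac a c y * sqrt (gram a b c x y z)"
    using F pos fac_pos_margin sqrt_gram_ge_margin coords margin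
    by (intro mult_mono) (auto simp: mult_nonneg_nonneg)
  have den_hi: "ffac a b x * ffac a c y * sqrt (gram a b c x y z) \<le> 4 * 4 * 34"
    using F fac_pos_margin sqrt_gram_le gram_pos_margin by (intro mult_mono) auto
  have den0: "0 < (2*T^2*\<delta>) * (2*T^2*\<delta>) * (T^3*\<delta>)" using coords margin by simp
  have "0 \<le> 8*a*area_num a b c x y z" using W0 coords by simp
  moreover have "0 < ffac a b x * ffac a c y * sqrt (gram a b c x y z)" using den_lo den0 by linarith
  ultimately have "8*T^6*\<delta>^2 / (4 * 4 * 34) \<le> area_deriv a b c x y z"
    unfolding area_deriv_def using num den_hi by (intro frac_le) auto
  then show "T^6*\<delta>^2 / 68 \<le> area_deriv a b c x y z" by (simp add: mult.commute)
  have "area_deriv a b c x y z \<le> 8*1*68 / ((2*T^2*\<delta>) * (2*T^2*\<delta>) * (T^3*\<delta>))"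
    unfolding area_deriv_def using num den_lo den0 W0 coords by (intro frac_le) auto
  also have "(2*T^2*\<delta>) * (2*T^2*\<delta>) * (T^3*\<delta>) = 4*(T^7*\<delta>^3)" by algebra
  finally show "area_deriv a b c x y z \<le> 136 / (T^7*\<delta>^3)" by (simp add: mult.commute)
qed

end


section \<open>Summing over the faces\<close>

lemma cos_margin:
  fixes \<Phi> :: "'e \<Rightarrow> real"
  assumes "finite E" "\<And>e. e \<in> E \<Longrightarrow> 0 \<le> \<Phi> e \<and> \<Phi> e < pi"
  obtains \<delta> :: real where "0 < \<delta>" "\<delta> \<le> 1" "\<And>e. e \<in> E \<Longrightarrow> \<delta> - 1 \<le> cos (\<Phi> e)"
proof
  let ?\<delta> = "Min (insert 1 ((\<lambda>e. 1 + cos (\<Phi> e)) ` E))"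
  have "0 < 1 + cos (\<Phi> e)" if "e \<in> E" for e
    using cos_monotone_0_pi[of "\<Phi> e" pi] assms(2)[OF that] by simp
  then show "0 < ?\<delta>" using assms(1) by (subst Min_gr_iff) auto
  show "?\<delta> \<le> 1" using assms(1) by (intro Min_le) auto
  show "?\<delta> - 1 \<le> cos (\<Phi> e)" if "e \<in> E" for e
  proof -
    have "?\<delta> \<le> 1 + cos (\<Phi> e)" using assms(1) that by (intro Min_le) auto
    then show ?thesis by simp
  qed
qed

lemma u_of_rad_bounds:
  assumes "0 < R" "R \<le> r"
  shows "u_of_rad r < 0" "tanh (R/2) \<le> exp (u_of_rad r)"
proof -
  have t: "0 < tanh (r/2)" "tanh (r/2) < 1" using assms tanh_real_lt_1 by auto
  then show "u_of_rad r < 0" unfolding u_of_rad_def by simp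
  show "tanh (R/2) \<le> exp (u_of_rad r)" unfolding u_of_rad_def using t assms by simp
qed

lemma card_3_obtain_vertex:
  assumes "card f = 3" "i \<in> f"
  obtains j k where "f = {i, j, k}" "i \<noteq> j" "i \<noteq> k" "j \<noteq> k"
proof -
  have "card (f - {i}) = 2" using assms by simp
  then obtain j k where jk: "f - {i} = {j, k}" "j \<noteq> k" by (auto simp: card_2_iff)
  then have "f = {i, j, k}" using assms(2) by blast
  with jk show thesis using that by blast
qed

lemma card_3_obtain_edge:
  assumes "card f = 3" "i \<in> f" "j \<in> f" "i \<noteq> j"
  obtains k where "f = {i, j, k}" "i \<noteq> k" "j \<noteq> k"
proof -
  have "card (f - {i, j}) = 1" using assms by (simp add: card_Diff_subset)
  then obtain k where k: "f - {i, j} = {k}" by (rule card_1_singletonE)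
  then have "f = {i, j, k}" using assms(2,3) by blast
  with k show thesis using that by blast
qed

lemma deriv_sum_bounds:
  fixes g :: "'b \<Rightarrow> real \<Rightarrow> real" and lo hi :: real
  assumes "finite S" "s0 \<in> S" "0 \<le> lo"
    and "\<And>s. s \<in> S \<Longrightarrow> \<exists>d. (g s has_real_derivative d) (at t) \<and> lo \<le> d \<and> d \<le> hi"
  shows "lo \<le> deriv (\<lambda>x. \<Sum>s\<in>S. g s x) t" "deriv (\<lambda>x. \<Sum>s\<in>S. g s x) t \<le> card S * hi"
proof -
  obtain D where D: "\<And>s. s \<in> S \<Longrightarrow> (g s has_real_derivative D s) (at t) \<and> lo \<le> D s \<and> D s \<le> hi"
    using assms(4) by metis
  have "((\<lambda>x. \<Sum>s\<in>S. g s x) has_real_derivative (\<Sum>s\<in>S. D s)) (at t)"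
    using D by (intro DERIV_sum) auto
  then have eq: "deriv (\<lambda>x. \<Sum>s\<in>S. g s x) t = (\<Sum>s\<in>S. D s)"
    by (rule DERIV_imp_deriv)
  have nonneg: "0 \<le> D s" if "s \<in> S" for s
    using D[OF that] assms(3) by linarith
  have "lo \<le> D s0" using D assms(2) by blast
  also have "D s0 \<le> (\<Sum>s\<in>S. D s)"
    using nonneg assms(1,2) by (intro member_le_sum) auto
  finally show "lo \<le> deriv (\<lambda>x. \<Sum>s\<in>S. g s x) t" unfolding eq .
  show "deriv (\<lambda>x. \<Sum>s\<in>S. g s x) t \<le> card S * hi"
    unfolding eq using D by (intro sum_bounded_above) auto
qed

locale packing_bounds =
  fixes V :: "'a set" and F :: "'a set set" and \<Phi> :: "'a set \<Rightarrow> real" and u :: "'a \<Rightarrow> real"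
    and T \<delta> :: real
  assumes finite_faces: "finite F"
    and faces: "\<And>f. f \<in> F \<Longrightarrow> f \<subseteq> V \<and> card f = 3"
    and star: "star_condition F \<Phi>"
    and margin: "0 < \<delta>" "\<delta> \<le> 1" "\<And>e. e \<in> tri_edges F \<Longrightarrow> \<delta> - 1 \<le> cos (\<Phi> e)"
    and coords: "0 < T" "\<And>w. w \<in> V \<Longrightarrow> u w < 0 \<and> T \<le> exp (u w)"
begin

(* The conclusions follow the order of the assumptions of the single-face bounds above, so that
   those lemmas apply via OF face_margin. *)
lemma face_margin:
  assumes "{i, j, k} \<in> F" "i \<noteq> j" "i \<noteq> k" "j \<noteq> k"
  shows "0 < T" "T \<le> exp (u i)" "exp (u i) < 1" "T \<le> exp (u j)" "exp (u j) < 1"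
    "T \<le> exp (u k)" "exp (u k) < 1"
    and "0 < \<delta>" "\<delta> \<le> 1" "\<delta> - 1 \<le> cos (\<Phi> {i, j})" "cos (\<Phi> {i, j}) \<le> 1"
    "\<delta> - 1 \<le> cos (\<Phi> {i, k})" "cos (\<Phi> {i, k}) \<le> 1" "\<delta> - 1 \<le> cos (\<Phi> {j, k})" "cos (\<Phi> {j, k}) \<le> 1"
    and "0 \<le> cos (\<Phi> {i, j}) + cos (\<Phi> {i, k}) * cos (\<Phi> {j, k})"
    "0 \<le> cos (\<Phi> {i, k}) + cos (\<Phi> {i, j}) * cos (\<Phi> {j, k})"
    "0 \<le> cos (\<Phi> {j, k}) + cos (\<Phi> {i, j}) * cos (\<Phi> {i, k})"
proof -
  have V: "i \<in> V" "j \<in> V" "k \<in> V" using conjunct1[OF faces[OF assms(1)]] by simp_all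
  show "0 < T" "T \<le> exp (u i)" "exp (u i) < 1" "T \<le> exp (u j)" "exp (u j) < 1"
    "T \<le> exp (u k)" "exp (u k) < 1"
    using coords V by auto
  have "{i, j} \<subseteq> {i, j, k}" "{i, k} \<subseteq> {i, j, k}" "{j, k} \<subseteq> {i, j, k}"
    "card {i, j} = 2" "card {i, k} = 2" "card {j, k} = 2"
    using assms(2-4) by auto
  then have "{i, j} \<in> tri_edges F" "{i, k} \<in> tri_edges F" "{j, k} \<in> tri_edges F"
    unfolding tri_edges_def using assms(1) by blast+
  then show "0 < \<delta>" "\<delta> \<le> 1" "\<delta> - 1 \<le> cos (\<Phi> {i, j})" "cos (\<Phi> {i, j}) \<le> 1"
    "\<delta> - 1 \<le> cos (\<Phi> {i, k})" "cos (\<Phi> {i, k}) \<le> 1" "\<delta> - 1 \<le> cos (\<Phi> {j, k})" "cos (\<Phi> {j, k}) \<le> 1"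
    using margin by auto
  have face_star: "0 \<le> cos (\<Phi> {p, q}) + cos (\<Phi> {p, w}) * cos (\<Phi> {q, w})" if "{p, q, w} \<in> F" for p q w
    using star[unfolded star_condition_def, rule_format, OF that refl] .
  have perm: "{i, k, j} = {i, j, k}" "{j, i, k} = {i, j, k}" "{k, j} = {j, k}" "{j, i} = {i, j}"
      "{k, i} = {i, k}"
    by auto
  show "0 \<le> cos (\<Phi> {i, j}) + cos (\<Phi> {i, k}) * cos (\<Phi> {j, k})"
    "0 \<le> cos (\<Phi> {i, k}) + cos (\<Phi> {i, j}) * cos (\<Phi> {j, k})"
    "0 \<le> cos (\<Phi> {j, k}) + cos (\<Phi> {i, j}) * cos (\<Phi> {i, k})"
    using face_star[of i j k] face_star[of i k j] face_star[of j k i] assms(1) unfolding perm by simp_all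
qed

lemma face_vertices_neg:
  assumes "{i, j, k} \<in> F"
  shows "u i < 0" "u j < 0" "u k < 0"
  using conjunct1[OF faces[OF assms]] coords by simp_all

lemma face_area_deriv_bounds:
  assumes "{i, j, k} \<in> F" "i \<noteq> j" "i \<noteq> k" "j \<noteq> k"
  shows "\<exists>d. ((\<lambda>s. area_u \<Phi> (u(i := s)) {i, j, k}) has_real_derivative d) (at (u i))
           \<and> T^6*\<delta>^2 / 68 \<le> d \<and> d \<le> 136 / (T^7*\<delta>^3)"
proof -
  note m = face_margin[OF assms]
  have "-1 < cos (\<Phi> {i, j})" "-1 < cos (\<Phi> {i, k})" "-1 < cos (\<Phi> {j, k})"
    using m by linarith+
  from area_u_has_derivative[OF assms(2-4) face_vertices_neg[OF assms(1)] this gram_pos_margin[OF m]]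
  show ?thesis using area_deriv_bounds[OF m] by blast
qed

lemma face_angle_deriv_bounds:
  assumes "{i, j, k} \<in> F" "i \<noteq> j" "i \<noteq> k" "j \<noteq> k"
  shows "\<exists>d. ((\<lambda>s. angle_u \<Phi> (u(j := s)) {i, j, k} i) has_real_derivative d) (at (u j))
           \<and> 0 \<le> d \<and> d \<le> 10 / (T^7*\<delta>^3)"
proof -
  note m = face_margin[OF assms]
  have "-1 < cos (\<Phi> {i, j})" "-1 < cos (\<Phi> {i, k})"
    using m by linarith+
  from angle_u_has_derivative[OF assms(2-4) face_vertices_neg[OF assms(1)] this gram_pos_margin[OF m]]
  show ?thesis using angle_deriv_bounds[OF m] by blast
qed

lemma A_coef_bounds:
  assumes "f \<in> F" "i \<in> f"
  shows "T^6*\<delta>^2 / 68 \<le> A_coef F \<Phi> u i" "A_coef F \<Phi> u i \<le> card F * (136 / (T^7*\<delta>^3))"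
proof -
  let ?Fi = "{f \<in> F. i \<in> f}"
  have face: "\<exists>d. ((\<lambda>s. area_u \<Phi> (u(i := s)) g) has_real_derivative d) (at (u i))
          \<and> T^6*\<delta>^2 / 68 \<le> d \<and> d \<le> 136 / (T^7*\<delta>^3)" if "g \<in> ?Fi" for g
  proof -
    have "card g = 3" "i \<in> g" using that faces by auto
    then obtain j k where "g = {i, j, k}" "i \<noteq> j" "i \<noteq> k" "j \<noteq> k"
      by (rule card_3_obtain_vertex)
    then show ?thesis using face_area_deriv_bounds that by simp
  qed
  have "finite ?Fi" "f \<in> ?Fi" "0 \<le> T^6*\<delta>^2 / 68" using finite_faces assms by auto
  note sum_bounds = deriv_sum_bounds[where g = "\<lambda>g t. area_u \<Phi> (u(i := t)) g", OF this face]
  then have "T^6*\<delta>^2 / 68 \<le> A_coef F \<Phi> u i" "A_coef F \<Phi> u i \<le> card ?Fi * (136 / (T^7*\<delta>^3))"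
    unfolding A_coef_def by blast+
  moreover have "card ?Fi * (136 / (T^7*\<delta>^3)) \<le> card F * (136 / (T^7*\<delta>^3))"
    using card_mono[OF finite_faces, of ?Fi] coords margin by (intro mult_right_mono) auto
  ultimately show "T^6*\<delta>^2 / 68 \<le> A_coef F \<Phi> u i" "A_coef F \<Phi> u i \<le> card F * (136 / (T^7*\<delta>^3))"
    by linarith+
qed

lemma B_coef_bounds:
  assumes "{i, j} \<in> tri_edges F"
  shows "0 \<le> B_coef F \<Phi> u i j" "B_coef F \<Phi> u i j \<le> card F * (10 / (T^7*\<delta>^3))"
proof -
  let ?Fij = "{f \<in> F. {i, j} \<subseteq> f}"
  have "i \<noteq> j" using assms unfolding tri_edges_def by (auto simp: card_insert_if)
  have each: "0 \<le> deriv (\<lambda>t. angle_u \<Phi> (u(j := t)) f i) (u j)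
      \<and> deriv (\<lambda>t. angle_u \<Phi> (u(j := t)) f i) (u j) \<le> 10 / (T^7*\<delta>^3)" if "f \<in> ?Fij" for f
  proof -
    have "card f = 3" "i \<in> f" "j \<in> f" using that faces by auto
    then obtain k where "f = {i, j, k}" "i \<noteq> k" "j \<noteq> k"
      using \<open>i \<noteq> j\<close> by (rule card_3_obtain_edge)
    then show ?thesis
      using face_angle_deriv_bounds[of i j k] \<open>i \<noteq> j\<close> that DERIV_imp_deriv by fastforce
  qed
  then show "0 \<le> B_coef F \<Phi> u i j"
    unfolding B_coef_def by (intro sum_nonneg) blast
  have "B_coef F \<Phi> u i j \<le> card ?Fij * (10 / (T^7*\<delta>^3))"
    unfolding B_coef_def using each by (intro sum_bounded_above) blast
  also have "\<dots> \<le> card F * (10 / (T^7*\<delta>^3))"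
    using card_mono[OF finite_faces, of ?Fij] coords margin by (intro mult_right_mono) auto
  finally show "B_coef F \<Phi> u i j \<le> card F * (10 / (T^7*\<delta>^3))" .
qed

lemma coef_bounds:
  assumes "\<And>v. v \<in> V \<Longrightarrow> \<exists>f\<in>F. v \<in> f"
  shows "(\<forall>i\<in>V. T^6*\<delta>^2 / 68 \<le> A_coef F \<Phi> u i \<and> A_coef F \<Phi> u i \<le> card F * (136 / (T^7*\<delta>^3)))
    \<and> (\<forall>i j. {i, j} \<in> tri_edges F \<longrightarrow>
         0 \<le> B_coef F \<Phi> u i j \<and> B_coef F \<Phi> u i j \<le> card F * (10 / (T^7*\<delta>^3)))"
  using assms A_coef_bounds B_coef_bounds by meson

end

lemma closed_surface_triangulationD:
  assumes "closed_surface_triangulation V F"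
  shows "finite F" "finite (tri_edges F)" "F \<noteq> {}"
    and "\<And>f. f \<in> F \<Longrightarrow> f \<subseteq> V \<and> card f = 3" and "\<And>v. v \<in> V \<Longrightarrow> \<exists>f\<in>F. v \<in> f"
proof -
  have finite_V: "finite V" and faces: "\<And>f. f \<in> F \<Longrightarrow> f \<subseteq> V \<and> card f = 3"
    and cover: "\<And>v. v \<in> V \<Longrightarrow> \<exists>f\<in>F. v \<in> f" and "V \<noteq> {}"
    using assms unfolding closed_surface_triangulation_def by auto
  show "\<And>f. f \<in> F \<Longrightarrow> f \<subseteq> V \<and> card f = 3" "\<And>v. v \<in> V \<Longrightarrow> \<exists>f\<in>F. v \<in> f"
    using faces cover by blast+
  have "F \<subseteq> Pow V" "tri_edges F \<subseteq> Pow V"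
    using faces unfolding tri_edges_def by blast+
  then show "finite F" "finite (tri_edges F)"
    using finite_V by (simp_all add: finite_subset)
  show "F \<noteq> {}" using cover \<open>V \<noteq> {}\<close> by blast
qed

lemma packing_bounds_of_radii:
  assumes "closed_surface_triangulation V F" "star_condition F \<Phi>"
    and "0 < \<delta>" "\<delta> \<le> 1" "\<And>e. e \<in> tri_edges F \<Longrightarrow> \<delta> - 1 \<le> cos (\<Phi> e)"
    and "0 < R" "\<forall>i\<in>V. R \<le> r i"
  shows "packing_bounds V F \<Phi> (\<lambda>w. u_of_rad (r w)) (tanh (R/2)) \<delta>"
proof
  show "u_of_rad (r w) < 0 \<and> tanh (R/2) \<le> exp (u_of_rad (r w))" if "w \<in> V" for w
    using u_of_rad_bounds[OF assms(6)] assms(7) that by blast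
qed (use closed_surface_triangulationD[OF assms(1)] assms(2-6) in auto)

theorem theorem1p1:
  fixes V :: "'a set" and F :: "'a set set" and \<Phi> :: "'a set \<Rightarrow> real" and R :: real
  assumes "closed_surface_triangulation V F"
    and "\<forall>e\<in>tri_edges F. 0 \<le> \<Phi> e \<and> \<Phi> e < pi"
    and "star_condition F \<Phi>"
    and "R > 0"
  shows "\<exists>a1 a2 a3. a1 > 0 \<and> a2 > 0 \<and> a3 > 0 \<and>
    (\<forall>r :: 'a \<Rightarrow> real. (\<forall>i\<in>V. r i \<ge> R) \<longrightarrow>
       (let u = (\<lambda>w. u_of_rad (r w)) in
         (\<forall>i\<in>V. a1 \<le> A_coef F \<Phi> u i \<and> A_coef F \<Phi> u i \<le> a2) \<and>
         (\<forall>i j. {i, j} \<in> tri_edges F \<longrightarrow>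
            0 \<le> B_coef F \<Phi> u i j \<and> B_coef F \<Phi> u i j \<le> a3)))"
proof -
  note tri = closed_surface_triangulationD[OF assms(1)]
  obtain \<delta> where \<delta>: "0 < \<delta>" "\<delta> \<le> 1" "\<And>e. e \<in> tri_edges F \<Longrightarrow> \<delta> - 1 \<le> cos (\<Phi> e)"
    using cos_margin[OF tri(2)] assms(2) by blast
  define T where "T = tanh (R/2)"
  have "0 < T" "0 < card F" using assms(4) tri(1,3) by (auto simp: T_def card_gt_0_iff)
  show ?thesis
  proof (intro exI conjI allI impI)
    show "0 < T^6*\<delta>^2 / 68" "0 < card F * (136 / (T^7*\<delta>^3))" "0 < card F * (10 / (T^7*\<delta>^3))"
      using \<open>0 < T\<close> \<open>0 < card F\<close> \<delta> by simp_all
  qed (use packing_bounds.coef_bounds[OF packing_bounds_of_radii[OF assms(1,3) \<delta> assms(4)] tri(5)]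
       in \<open>simp add: Let_def T_def\<close>)
qed

end
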